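(* Let $V$ be a ground model, $\kappa$ an infinite cardinal, $\mathbb{A}\in V$ a Boolean algebra, and let $\dot{\mathcal{U}}_n$ ($n\in\omega$) and $\dot{\mathcal{U}}$ be $\mathbb{M}_\kappa$-names with $\Vdash_{\mathbb{M}_\kappa}$ "$\dot{\mathcal{U}}_n$ and $\dot{\mathcal{U}}$ are ultrafilters on $\mathbb{A}$". Let $\varphi_n=\varphi_{\dot{\mathcal{U}}_n}$ and $\varphi=\varphi_{\dot{\mathcal{U}}}$. Then $\Vdash_{\mathbb{M}_\kappa}$ "$(\dot{\mathcal{U}}_n)$ converges to $\dot{\mathcal{U}}$ in $St(\mathbb{A})$" if and only if $(\varphi_n)$ converges pointwise algebraically to $\varphi$.
   Context: $\mathbb{M}_\kappa$ is the measure algebra $Bor(2^\kappa)/\mathcal{N}_\kappa$ of the standard product measure on $2^\kappa$, used as a forcing notion. For an $\mathbb{M}_\kappa$-name $\dot{\mathcal{U}}$ for an ultrafilter on $\mathbb{A}$, $\varphi_{\dot{\mathcal{U}}}\colon\mathbb{A}\to\mathbb{M}_\kappa$ is the homomorphism (in $V$) given by $\varphi_{\dot{\mathcal{U}}}(A)=\llbracket A\in\dot{\mathcal{U}}\rrbracket$ (Boolean value). $St(\mathbb{A})$ in the extension is the space of ultrafilters on $\mathbb{A}$ with the Stone topology. $(\varphi_n)$ converges pointwise algebraically to $\varphi$ if for every $A\in\mathbb{A}$, $\bigvee_n\bigwedge_{m>n}\varphi_m(A)=\bigwedge_n\bigvee_{m>n}\varphi_m(A)=\varphi(A)$. *)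

theory Defs
  imports "HOL-Probability.Probability" "HOL-Library.Infinite_Typeclass"
begin

text \<open>The measure algebra M_kappa is represented via the product (fair coin) measure
  on kappa => bool, where the infinite cardinal kappa is the cardinality of an infinite type 'k.
  Conditions are measurable sets of positive measure; q extends p iff q - p is null.\<close>

definition Mk :: "('k::infinite \<Rightarrow> bool) measure" where
  "Mk = PiM UNIV (\<lambda>_. measure_pmf (bernoulli_pmf (1/2)))"

text \<open>Equality in the measure algebra (equality modulo null sets).\<close>
definition meq :: "'m measure \<Rightarrow> 'm set \<Rightarrow> 'm set \<Rightarrow> bool" where
  "meq M X Y \<longleftrightarrow> X - Y \<in> null_sets M \<and> Y - X \<in> null_sets M"

text \<open>Mem a i stands for
  "check(a) is an element of the name with index i"; AllA quantifies over the ground Boolean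
  algebra, AllN over omega; Tru b is a ground (absolute) sentence with truth value b.\<close>
datatype ('a, 'i) fml =
    Mem 'a 'i
  | Tru bool
  | Neg "('a, 'i) fml"
  | Conj "('a, 'i) fml" "('a, 'i) fml"
  | AllA "'a \<Rightarrow> ('a, 'i) fml"
  | AllN "nat \<Rightarrow> ('a, 'i) fml"

definition Disj where "Disj f g = Neg (Conj (Neg f) (Neg g))"
definition Imp where "Imp f g = Neg (Conj f (Neg g))"
definition ExN where "ExN F = Neg (AllN (\<lambda>n. Neg (F n)))"

text \<open>A name for a subset of the ground algebra is represented by the Boolean values of
  membership of the check names: N i a is a (representative of) the Boolean value
  [[ check a \<in> name i ]].\<close>
primrec forces :: "'m measure \<Rightarrow> ('i \<Rightarrow> 'a \<Rightarrow> 'm set) \<Rightarrow> ('a, 'i) fml \<Rightarrow> 'm set \<Rightarrow> bool" where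
  "forces M N (Mem a i) p = (p - N i a \<in> null_sets M)"
| "forces M N (Tru b) p = b"
| "forces M N (Neg f) p =
     (\<forall>q\<in>sets M. q \<notin> null_sets M \<longrightarrow> q - p \<in> null_sets M \<longrightarrow> \<not> forces M N f q)"
| "forces M N (Conj f g) p = (forces M N f p \<and> forces M N g p)"
| "forces M N (AllA F) p = (\<forall>a. forces M N (F a) p)"
| "forces M N (AllN F) p = (\<forall>n. forces M N (F n) p)"

definition forces_all :: "'m measure \<Rightarrow> ('i \<Rightarrow> 'a \<Rightarrow> 'm set) \<Rightarrow> ('a, 'i) fml \<Rightarrow> bool" where
  "forces_all M N f \<longleftrightarrow> (\<forall>p\<in>sets M. p \<notin> null_sets M \<longrightarrow> forces M N f p)"

definition uf_fml :: "'i \<Rightarrow> ('a::boolean_algebra, 'i) fml" where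
  "uf_fml i =
     Conj (AllA (\<lambda>a. AllA (\<lambda>b. Imp (Conj (Mem a i) (Mem b i)) (Mem (inf a b) i))))
    (Conj (AllA (\<lambda>a. AllA (\<lambda>b. Imp (Conj (Mem a i) (Tru (a \<le> b))) (Mem b i))))
    (Conj (Mem top i)
    (Conj (Neg (Mem bot i))
          (AllA (\<lambda>a. Disj (Mem a i) (Mem (- a) i))))))"

definition nm :: "(nat \<Rightarrow> 'a \<Rightarrow> 'm set) \<Rightarrow> ('a \<Rightarrow> 'm set) \<Rightarrow> nat option \<Rightarrow> 'a \<Rightarrow> 'm set" where
  "nm Us U i = (case i of None \<Rightarrow> U | Some n \<Rightarrow> Us n)"

text \<open>"(U_n) converges to U in St(A)": every basic clopen [a] containing U
  eventually contains U_n.\<close>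
definition conv_fml :: "('a, nat option) fml" where
  "conv_fml = AllA (\<lambda>a. Imp (Mem a None)
       (ExN (\<lambda>n. AllN (\<lambda>m. Imp (Tru (n \<le> m)) (Mem a (Some m))))))"

end

(* In the measure algebra every formula f has a Boolean value [[f]]: a measurable set such that
   p ||- f iff p \<subseteq> [[f]] modulo null sets.  Hence ||- f holds iff [[f]] is conull, and
   forced statements about the names become almost-everywhere statements about points x.
   Forced convergence of U_n to U says: for every a and almost every x, x \<in> U a implies
   x \<in> U_m a for all large m.  As the names are forced to be ultrafilters, almost surely
   x \<in> U (-a) iff x \<notin> U a, and likewise for every U_m; so applying convergence to a and to -a
   shows that for almost every x the membership x \<in> U_m a is eventually constant, with limit
   x \<in> U a.  That is exactly lim inf = lim sup = phi(a) in the measure algebra. *)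

theory Submission
  imports Defs
begin

definition boolean_value :: "'m measure \<Rightarrow> ('i \<Rightarrow> 'a \<Rightarrow> 'm set) \<Rightarrow> ('a, 'i) fml \<Rightarrow> 'm set \<Rightarrow> bool" where
  "boolean_value M N f B \<longleftrightarrow> B \<in> sets M \<and>
     (\<forall>p\<in>sets M. p \<notin> null_sets M \<longrightarrow> (forces M N f p \<longleftrightarrow> p - B \<in> null_sets M))"

lemma boolean_value_Mem: "N i a \<in> sets M \<Longrightarrow> boolean_value M N (Mem a i) (N i a)"
  by (simp add: boolean_value_def)

lemma boolean_value_Tru: "boolean_value M N (Tru b) (if b then space M else {})"
  by (auto simp: boolean_value_def Diff_eq_empty_iff[THEN iffD2, OF sets.sets_into_space])

lemma boolean_value_Neg:
  assumes "boolean_value M N f B"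
  shows "boolean_value M N (Neg f) (space M - B)"
proof -
  have B: "B \<in> sets M"
    and f: "\<And>p. p \<in> sets M \<Longrightarrow> p \<notin> null_sets M \<Longrightarrow> forces M N f p \<longleftrightarrow> p - B \<in> null_sets M"
    using assms by (auto simp: boolean_value_def)
  have "forces M N (Neg f) p \<longleftrightarrow> p \<inter> B \<in> null_sets M" if p: "p \<in> sets M" for p
  proof
    assume Neg: "forces M N (Neg f) p"
    show "p \<inter> B \<in> null_sets M"
    proof (rule ccontr)
      assume pB: "p \<inter> B \<notin> null_sets M"
      with p B f[of "p \<inter> B"] have "forces M N f (p \<inter> B)"
        by (simp add: Diff_eq_empty_iff[THEN iffD2])
      moreover have "p \<inter> B - p \<in> null_sets M"
        by (simp add: Diff_eq_empty_iff[THEN iffD2])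
      ultimately show False
        using Neg p B pB by auto
    qed
  next
    assume pB: "p \<inter> B \<in> null_sets M"
    show "forces M N (Neg f) p"
    proof (clarsimp)
      fix q assume q: "q \<in> sets M" "q \<notin> null_sets M" "q - p \<in> null_sets M" "forces M N f q"
      with f have "q - B \<in> null_sets M" by blast
      with q(3) pB have "(q - p) \<union> (p \<inter> B) \<union> (q - B) \<in> null_sets M" by blast
      then have "q \<in> null_sets M" using q(1) by (rule null_sets_subset) blast
      with q(2) show False ..
    qed
  qed
  moreover have "p - (space M - B) = p \<inter> B" if "p \<in> sets M" for p
    using sets.sets_into_space[OF that] by blast
  ultimately show ?thesis
    using B by (simp add: boolean_value_def)
qed

lemma boolean_value_Conj:
  assumes "boolean_value M N f B" "boolean_value M N g C"
  shows "boolean_value M N (Conj f g) (B \<inter> C)"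
proof -
  have "p - (B \<inter> C) \<in> null_sets M \<longleftrightarrow> p - B \<in> null_sets M \<and> p - C \<in> null_sets M"
    if "p \<in> sets M" for p
    using that assms unfolding boolean_value_def Diff_Int
    by (meson Diff_mono null_sets.Un null_sets_subset order_refl sets.Diff sup_ge1 sup_ge2)
  then show ?thesis
    using assms by (auto simp: boolean_value_def)
qed

lemma boolean_value_AllN:
  assumes "\<And>n. boolean_value M N (F n) (B n)"
  shows "boolean_value M N (AllN F) (\<Inter>n. B n)"
proof -
  have B: "\<And>n. B n \<in> sets M"
    using assms by (simp add: boolean_value_def)
  have "p - (\<Inter>n. B n) \<in> null_sets M \<longleftrightarrow> (\<forall>n. p - B n \<in> null_sets M)"
    if "p \<in> sets M" for p
  proof -
    have "p - (\<Inter>n. B n) = (\<Union>n. p - B n)" by blast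
    then show ?thesis
      using that B by (metis UNIV_I UN_upper null_sets_UN null_sets_subset sets.Diff)
  qed
  then show ?thesis
    using assms B by (auto simp: boolean_value_def)
qed

lemma boolean_value_Imp:
  "boolean_value M N f B \<Longrightarrow> boolean_value M N g C \<Longrightarrow>
    boolean_value M N (Imp f g) (space M - (B \<inter> (space M - C)))"
  unfolding Imp_def by (intro boolean_value_Neg boolean_value_Conj)

lemma boolean_value_Disj:
  "boolean_value M N f B \<Longrightarrow> boolean_value M N g C \<Longrightarrow>
    boolean_value M N (Disj f g) (space M - ((space M - B) \<inter> (space M - C)))"
  unfolding Disj_def by (intro boolean_value_Neg boolean_value_Conj)

lemma boolean_value_ExN:
  "(\<And>n. boolean_value M N (F n) (B n)) \<Longrightarrow>
    boolean_value M N (ExN F) (space M - (\<Inter>n. space M - B n))"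
  unfolding ExN_def by (intro boolean_value_Neg boolean_value_AllN)

lemma forces_all_iff_AE:
  assumes val: "boolean_value M N f B" and nontrivial: "space M \<notin> null_sets M"
  shows "forces_all M N f \<longleftrightarrow> (AE x in M. x \<in> B)"
proof -
  have B: "B \<in> sets M"
    using val by (simp add: boolean_value_def)
  have "forces_all M N f \<longleftrightarrow> space M - B \<in> null_sets M"
  proof
    assume "forces_all M N f"
    with val nontrivial show "space M - B \<in> null_sets M"
      by (simp add: forces_all_def boolean_value_def)
  next
    assume null: "space M - B \<in> null_sets M"
    have "p - B \<in> null_sets M" if "p \<in> sets M" for p
      using that B by (intro null_sets_subset[OF null]) (auto dest: sets.sets_into_space)
    with val show "forces_all M N f"
      by (simp add: forces_all_def boolean_value_def)
  qed
  also have "\<dots> \<longleftrightarrow> (AE x in M. x \<in> B)"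
    using AE_iff_null_sets[of "space M - B" M] B by (auto intro: AE_cong)
  finally show ?thesis .
qed

lemma forces_all_Conj: "forces_all M N (Conj f g) \<longleftrightarrow> forces_all M N f \<and> forces_all M N g"
  unfolding forces_all_def by auto

lemma forces_all_AllA: "forces_all M N (AllA F) \<longleftrightarrow> (\<forall>a. forces_all M N (F a))"
  unfolding forces_all_def by auto

lemma meq_iff_AE:
  assumes "X \<in> sets M" "Y \<in> sets M"
  shows "meq M X Y \<longleftrightarrow> (AE x in M. x \<in> X \<longleftrightarrow> x \<in> Y)"
proof -
  have "meq M X Y \<longleftrightarrow> (AE x in M. x \<notin> X - Y) \<and> (AE x in M. x \<notin> Y - X)"
    using assms by (simp add: meq_def AE_iff_null_sets)
  also have "\<dots> \<longleftrightarrow> (AE x in M. x \<in> X \<longleftrightarrow> x \<in> Y)"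
    by (subst AE_conj_iff[symmetric]) (auto intro: AE_cong)
  finally show ?thesis .
qed

lemma forces_ultrafilter_AE_compl:
  assumes meas: "\<And>a. N i a \<in> sets M" and nontrivial: "space M \<notin> null_sets M"
    and uf: "forces_all M N (uf_fml i)"
  shows "AE x in M. x \<in> N i (- a) \<longleftrightarrow> x \<notin> N i a"
proof -
  have val: "\<And>a. boolean_value M N (Mem a i) (N i a)"
    by (rule boolean_value_Mem, rule meas)
  have "forces_all M N (Imp (Conj (Mem a i) (Mem (- a) i)) (Mem (inf a (- a)) i))"
    and "forces_all M N (Neg (Mem bot i))"
    and "forces_all M N (Disj (Mem a i) (Mem (- a) i))"
    using uf unfolding uf_fml_def forces_all_Conj forces_all_AllA by blast+
  then have "AE x in M. x \<in> space M - ((N i a \<inter> N i (- a)) \<inter> (space M - N i (inf a (- a))))"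
    and "AE x in M. x \<in> space M - N i bot"
    and "AE x in M. x \<in> space M - ((space M - N i a) \<inter> (space M - N i (- a)))"
    using forces_all_iff_AE[OF boolean_value_Imp[OF boolean_value_Conj[OF val val] val] nontrivial]
      forces_all_iff_AE[OF boolean_value_Neg[OF val] nontrivial]
      forces_all_iff_AE[OF boolean_value_Disj[OF val val] nontrivial]
    by blast+
  then show ?thesis
    by eventually_elim auto
qed

lemma forces_convergence_iff_AE:
  assumes meas: "\<And>i a. nm Us U i a \<in> sets M" and nontrivial: "space M \<notin> null_sets M"
  shows "forces_all M (nm Us U) conv_fml \<longleftrightarrow>
    (\<forall>a. AE x in M. x \<in> U a \<longrightarrow> (\<forall>\<^sub>F m in sequentially. x \<in> Us m a))"
proof -
  have "forces_all M (nm Us U) conv_fml \<longleftrightarrow> (\<forall>a. AE x in M. x \<in> space M - (nm Us U None a \<inter>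
      (space M - (space M - (\<Inter>n. space M - (\<Inter>m. space M -
        ((if n \<le> m then space M else {}) \<inter> (space M - nm Us U (Some m) a))))))))"
    unfolding conv_fml_def forces_all_AllA
    by (intro all_cong1 forces_all_iff_AE[OF _ nontrivial] boolean_value_Imp boolean_value_Mem
        boolean_value_ExN boolean_value_AllN boolean_value_Tru meas)
  also have "\<dots> \<longleftrightarrow> (\<forall>a. AE x in M. x \<in> U a \<longrightarrow> (\<forall>\<^sub>F m in sequentially. x \<in> Us m a))"
    by (intro all_cong1 AE_cong) (auto simp: nm_def eventually_sequentially)
  finally show ?thesis .
qed

lemma liminf_set_greaterThan: "(\<Union>n. \<Inter>m\<in>{n<..}. A m) = liminf A"
  by (rule set_eqI) (simp add: mem_liminf_iff eventually_at_top_dense, simp add: Ball_def)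

lemma limsup_set_greaterThan: "(\<Inter>n. \<Union>m\<in>{n<..}. A m) = limsup A"
  by (rule set_eqI) (simp add: mem_limsup_iff frequently_def eventually_at_top_dense Bex_def)

lemma eventually_frequently_iff_of_dichotomy:
  assumes "F \<noteq> bot" and "u \<Longrightarrow> eventually P F" and "\<not> u \<Longrightarrow> eventually (\<lambda>m. \<not> P m) F"
  shows "(eventually P F \<longleftrightarrow> u) \<and> (frequently P F \<longleftrightarrow> u)"
proof (cases u)
  case True
  with assms show ?thesis
    by (simp add: eventually_frequently)
next
  case False
  with assms have "\<not> frequently P F"
    by (simp add: not_frequently)
  with False show ?thesis
    by (auto dest: eventually_frequently[OF \<open>F \<noteq> bot\<close>])
qed

lemma meq_liminf_limsup_iff_AE:
  assumes "\<And>m. A m \<in> sets M" and "B \<in> sets M"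
  shows "meq M (liminf A) B \<and> meq M (limsup A) B \<longleftrightarrow>
    (AE x in M. ((\<forall>\<^sub>F m in sequentially. x \<in> A m) \<longleftrightarrow> x \<in> B) \<and>
                ((\<exists>\<^sub>F m in sequentially. x \<in> A m) \<longleftrightarrow> x \<in> B))"
  using assms
  by (simp add: meq_iff_AE measurable_liminf measurable_limsup mem_liminf_iff mem_limsup_iff AE_conj_iff)

lemma forces_convergence_iff_liminf_limsup:
  fixes Us :: "nat \<Rightarrow> 'a::boolean_algebra \<Rightarrow> 'm set"
  assumes meas: "\<And>i a. nm Us U i a \<in> sets M" and nontrivial: "space M \<notin> null_sets M"
    and uf: "\<And>i. forces_all M (nm Us U) (uf_fml i)"
  shows "forces_all M (nm Us U) conv_fml \<longleftrightarrow>
    (\<forall>a. meq M (liminf (\<lambda>m. Us m a)) (U a) \<and> meq M (limsup (\<lambda>m. Us m a)) (U a))"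
proof -
  have Us: "\<And>m a. Us m a \<in> sets M" and U: "\<And>a. U a \<in> sets M"
    using meas[of "Some _"] meas[of None] by (simp_all add: nm_def)
  have conv_iff: "forces_all M (nm Us U) conv_fml \<longleftrightarrow>
      (\<forall>a. AE x in M. x \<in> U a \<longrightarrow> (\<forall>\<^sub>F m in sequentially. x \<in> Us m a))"
    by (rule forces_convergence_iff_AE[OF meas nontrivial])
  have "AE x in M. ((\<forall>\<^sub>F m in sequentially. x \<in> Us m a) \<longleftrightarrow> x \<in> U a) \<and>
                    ((\<exists>\<^sub>F m in sequentially. x \<in> Us m a) \<longleftrightarrow> x \<in> U a)"
    if conv: "forces_all M (nm Us U) conv_fml" for a
  proof -
    have "AE x in M. x \<in> U (- a) \<longleftrightarrow> x \<notin> U a"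
      using forces_ultrafilter_AE_compl[OF meas nontrivial uf, of None] by (simp add: nm_def)
    moreover have "AE x in M. \<forall>m. x \<in> Us m (- a) \<longleftrightarrow> x \<notin> Us m a"
      using forces_ultrafilter_AE_compl[OF meas nontrivial uf, of "Some _"]
      by (simp add: nm_def AE_all_countable)
    moreover have "AE x in M. x \<in> U b \<longrightarrow> (\<forall>\<^sub>F m in sequentially. x \<in> Us m b)" for b
      using conv conv_iff by blast
    note this[of a] this[of "- a"]
    \<comment> \<open>convergence at a and at -a decides the tail of x \<in> Us m a for almost every x\<close>
    ultimately show ?thesis
    proof eventually_elim
      case (elim x)
      show ?case
        by (rule eventually_frequently_iff_of_dichotomy) (use elim in auto)
    qed
  qed
  moreover have "AE x in M. x \<in> U a \<longrightarrow> (\<forall>\<^sub>F m in sequentially. x \<in> Us m a)"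
    if "AE x in M. ((\<forall>\<^sub>F m in sequentially. x \<in> Us m a) \<longleftrightarrow> x \<in> U a) \<and>
                    ((\<exists>\<^sub>F m in sequentially. x \<in> Us m a) \<longleftrightarrow> x \<in> U a)" for a
    using that by (rule eventually_mono) blast
  ultimately show ?thesis
    unfolding meq_liminf_limsup_iff_AE[OF Us U] using conv_iff by blast
qed

theorem proposition7p3:
  fixes Us :: "nat \<Rightarrow> 'a::boolean_algebra \<Rightarrow> ('k::infinite \<Rightarrow> bool) set"
    and U :: "'a \<Rightarrow> ('k \<Rightarrow> bool) set"
  assumes "\<And>n a. Us n a \<in> sets Mk"
    and "\<And>a. U a \<in> sets Mk"
    and "\<And>n. forces_all Mk (nm Us U) (uf_fml (Some n))"
    and "forces_all Mk (nm Us U) (uf_fml None)"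
  shows "forces_all Mk (nm Us U) conv_fml \<longleftrightarrow>
    (\<forall>a. meq Mk (\<Union>n. \<Inter>m\<in>{n<..}. Us m a) (U a) \<and>
         meq Mk (\<Inter>n. \<Union>m\<in>{n<..}. Us m a) (U a))"
proof -
  have "prob_space (Mk :: ('k \<Rightarrow> bool) measure)"
    unfolding Mk_def by (intro prob_space_PiM prob_space_measure_pmf)
  then have "space (Mk :: ('k \<Rightarrow> bool) measure) \<notin> null_sets Mk"
    by (metis null_setsD1 prob_space.emeasure_space_1 zero_neq_one)
  moreover have "nm Us U i a \<in> sets Mk" for i a
    using assms(1,2) by (simp add: nm_def split: option.split)
  moreover have "forces_all Mk (nm Us U) (uf_fml i)" for i
    using assms(3,4) by (cases i) simp_all
  ultimately show ?thesis
    by (simp add: forces_convergence_iff_liminf_limsup liminf_set_greaterThan limsup_set_greaterThan)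
qed

end
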